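(* Let $u,\gamma>0$, $s>0$, $\nu_0\in(0,1)$ and $\nu_1=1-\nu_0$, and let $F(y)=-y(1-y)[s+\gamma(1-y)]+u\nu_1(1-y)-u\nu_0y$. If $u<s$ or $\gamma<s$, then $F$ has exactly one root in $[0,1]$. *)

theory Defs
  imports Complex_Main
begin

end

theory Submission
  imports Defs
begin

text \<open>
  Substituting \<open>z = 1 - y\<close> turns \<open>-F\<close> into the cubic
  \<open>p z = -\<gamma> z\<^sup>3 + (\<gamma> - s) z\<^sup>2 + (s - u) z + u \<nu>\<^sub>0\<close>, and \<open>F 0 > 0 > F 1\<close> gives a root
  by the intermediate value theorem. If \<open>\<gamma> < s\<close> or \<open>u < s\<close>, the coefficients of \<open>p\<close> change
  sign only once, so by Descartes' rule \<open>p\<close> has a single positive root. Elementarily: for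
  roots \<open>0 < z\<^sub>1 < z\<^sub>2\<close>, the combination \<open>z\<^sub>2 p z\<^sub>1 - z\<^sub>1 p z\<^sub>2\<close> gives
  \<open>u \<nu>\<^sub>0 = z\<^sub>1 z\<^sub>2 (\<gamma> - s - \<gamma> (z\<^sub>1 + z\<^sub>2))\<close>, whose right-hand side is negative.
\<close>

lemma cubic_Uniq_nonneg_root:
  fixes g b a c :: real
  assumes g: "g > 0" and c: "c > 0" and signs: "b \<le> 0 \<or> a \<ge> 0"
  shows "\<exists>\<^sub>\<le>\<^sub>1z. z \<ge> 0 \<and> -g*z^3 + b*z^2 + a*z + c = 0"
proof -
  define p where "p z = -g*z^3 + b*z^2 + a*z + c" for z
  have no_two_roots: False
    if z1: "0 \<le> z1" and lt: "z1 < z2" and roots: "p z1 = 0" "p z2 = 0" for z1 z2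
  proof -
    have "z1 \<noteq> 0" using roots c by (auto simp: p_def)
    with z1 lt have pos: "z1 > 0" "z2 > 0" by auto
    have "z2 * p z1 - z1 * p z2 = (z2 - z1) * (c - z1*z2*(b - g*(z1+z2)))"
      by (simp add: p_def algebra_simps power2_eq_square power3_eq_cube)
    with roots lt have vieta: "c = z1*z2*(b - g*(z1+z2))" by simp
    have "b - g*z2 < 0"
      using signs
    proof
      assume "b \<le> 0"
      moreover have "g*z2 > 0" using g pos by simp
      ultimately show ?thesis by simp
    next
      assume "a \<ge> 0"
      have "z2^2 * (b - g*z2) = p z2 - a*z2 - c"
        by (simp add: p_def algebra_simps power2_eq_square power3_eq_cube)
      also have "\<dots> < 0"
        using roots c mult_nonneg_nonneg[OF \<open>a \<ge> 0\<close> less_imp_le[OF pos(2)]] by simp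
      finally show ?thesis by (simp add: mult_less_0_iff)
    qed
    moreover have "g*z1 > 0" using g pos by simp
    ultimately have "b - g*(z1+z2) < 0" by (simp add: distrib_left)
    then have "z1*z2*(b - g*(z1+z2)) < 0" using pos by (simp add: mult_pos_neg)
    with vieta c show False by simp
  qed
  show ?thesis
    unfolding p_def[symmetric]
  proof (rule Uniq_I)
    fix z1 z2 assume "z1 \<ge> 0 \<and> p z1 = 0" "z2 \<ge> 0 \<and> p z2 = 0"
    then show "z2 = z1"
      using no_two_roots by (metis linorder_neqE_linordered_idom)
  qed
qed

theorem proposition3p2:
  fixes u \<gamma> s \<nu>\<^sub>0 \<nu>\<^sub>1 :: real and F :: "real \<Rightarrow> real"
  assumes "u > 0" and "\<gamma> > 0" and "s > 0"
    and "0 < \<nu>\<^sub>0" and "\<nu>\<^sub>0 < 1" and "\<nu>\<^sub>1 = 1 - \<nu>\<^sub>0"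
    and "\<And>y. F y = - y * (1 - y) * (s + \<gamma> * (1 - y)) + u * \<nu>\<^sub>1 * (1 - y) - u * \<nu>\<^sub>0 * y"
    and "u < s \<or> \<gamma> < s"
  shows "\<exists>!y. y \<in> {0..1} \<and> F y = 0"
proof -
  note F_def = assms(7) and \<nu>\<^sub>1_def = assms(6)
  have F_reflected: "F y = - (-\<gamma>*(1-y)^3 + (\<gamma>-s)*(1-y)^2 + (s-u)*(1-y) + u*\<nu>\<^sub>0)" for y
    unfolding F_def \<nu>\<^sub>1_def by (simp add: algebra_simps power2_eq_square power3_eq_cube)
  have cubic: "\<exists>\<^sub>\<le>\<^sub>1z. z \<ge> 0 \<and> -\<gamma>*z^3 + (\<gamma>-s)*z^2 + (s-u)*z + u*\<nu>\<^sub>0 = 0"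
    by (rule cubic_Uniq_nonneg_root) (use assms in auto)
  have "\<exists>y. 0 \<le> y \<and> y \<le> 1 \<and> F y = 0"
    by (rule IVT2) (use assms in \<open>auto simp: F_def\<close>)
  moreover have "\<exists>\<^sub>\<le>\<^sub>1y. y \<in> {0..1} \<and> F y = 0"
  proof (rule Uniq_I)
    fix y1 y2 assume "y1 \<in> {0..1} \<and> F y1 = 0" "y2 \<in> {0..1} \<and> F y2 = 0"
    then have "1 - y2 = 1 - y1"
      using Uniq_D[OF cubic, of "1 - y1" "1 - y2"] by (simp add: F_reflected)
    then show "y2 = y1" by simp
  qed
  ultimately show ?thesis by (auto simp: ex1_iff_ex_Uniq)
qed

end
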